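(* Let $X_{\text{box}}=\prod_{i=1}^n [l_i,u_i]\subset\mathbb{R}^n$ with $l_i<u_i$ for all $i$, and let $\psi\in\mathcal{C}^3(\operatorname{int}(X_{\text{box}}))$ be convex. Suppose there exists $\beta>0$ such that for all $x\in\operatorname{int}(X_{\text{box}})$ and all $h\in\mathbb{R}^n$, $$\big|\nabla^3\psi(x)[h,h,h]\big|\le \beta\, h^T\nabla^2\psi(x)h\,\sqrt{\sum_{i=1}^n \Big(\frac{h_i^2}{(u_i-x_i)^2}+\frac{h_i^2}{(x_i-l_i)^2}\Big)}.$$ Then for every $t>0$ the function $\bar\psi_t(x)=\psi(x)-t\sum_{i=1}^n\log\big((u_i-x_i)(x_i-l_i)\big)$ is $2(1+\beta)/\sqrt{t}$-self-concordant on $\operatorname{int}(X_{\text{box}})$.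
   Context: For $M\ge 0$, a closed convex function $\phi$ with open convex domain $X_\phi\subseteq\mathbb{R}^n$ is called $M$-self-concordant if $\phi$ is three times continuously differentiable on $X_\phi$ and for all $x\in X_\phi$ and $h\in\mathbb{R}^n$, $\nabla^3\phi(x)[h,h,h]\le M\,(h^T\nabla^2\phi(x)h)^{3/2}$, where $\nabla^3\phi(x)[h_1,h_2,h_3]$ denotes the third differential of $\phi$ at $x$ along $h_1,h_2,h_3$. *)

theory Defs
  imports "HOL-Analysis.Analysis"
begin

definition D1 :: "('a::real_normed_vector \<Rightarrow> real) \<Rightarrow> 'a \<Rightarrow> 'a \<Rightarrow> real" where
  "D1 f x h = frechet_derivative f (at x) h"

definition D2 :: "('a::real_normed_vector \<Rightarrow> real) \<Rightarrow> 'a \<Rightarrow> 'a \<Rightarrow> 'a \<Rightarrow> real" where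
  "D2 f x h k = frechet_derivative (\<lambda>y. D1 f y h) (at x) k"

definition D3 :: "('a::real_normed_vector \<Rightarrow> real) \<Rightarrow> 'a \<Rightarrow> 'a \<Rightarrow> 'a \<Rightarrow> 'a \<Rightarrow> real" where
  "D3 f x h k l = frechet_derivative (\<lambda>y. D2 f y h k) (at x) l"

definition C3_on :: "'a::real_normed_vector set \<Rightarrow> ('a \<Rightarrow> real) \<Rightarrow> bool" where
  "C3_on S f \<longleftrightarrow>
     f differentiable_on S \<and>
     (\<forall>h. (\<lambda>y. D1 f y h) differentiable_on S) \<and>
     (\<forall>h k. (\<lambda>y. D2 f y h k) differentiable_on S) \<and>
     (\<forall>h k l. continuous_on S (\<lambda>y. D3 f y h k l))"

definition closed_convex_fun :: "'a::euclidean_space set \<Rightarrow> ('a \<Rightarrow> real) \<Rightarrow> bool" where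
  "closed_convex_fun X f \<longleftrightarrow> open X \<and> convex X \<and> convex_on X f \<and> closed (epigraph X f)"

definition self_concordant :: "real \<Rightarrow> 'a::euclidean_space set \<Rightarrow> ('a \<Rightarrow> real) \<Rightarrow> bool" where
  "self_concordant M X f \<longleftrightarrow> M \<ge> 0 \<and> closed_convex_fun X f \<and> C3_on X f \<and>
     (\<forall>x\<in>X. \<forall>h. D3 f x h h h \<le> M * (D2 f x h h) powr (3/2))"

end

theory Submission
  imports Defs
begin

(* The logarithmic barrier of the box is separable, so its higher differentials are diagonal.
   With a_i = h_i / (u_i - x_i), b_i = - h_i / (x_i - l_i) and S = sum_i (a_i^2 + b_i^2), subtracting
   t times the barrier adds t S to the second differential and 2t sum_i (a_i^3 + b_i^3) <= 2t S^(3/2)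
   to the third.  If Q = D2 psi x h h, the hypothesis bounds the third differential of psi by
   beta Q sqrt S, and since sqrt t sqrt S <= sqrt (Q + t S), both contributions are at most
   (beta + 2) / sqrt t (Q + t S)^(3/2).  The epigraph is closed because the barrier term tends to
   +infinity at the boundary of the box, while the convex psi is bounded below on the box. *)

definition log_barrier :: "real \<Rightarrow> real \<Rightarrow> real \<Rightarrow> real" where
  "log_barrier a b s = ln ((b - s) * (s - a))"

definition log_barrier' :: "real \<Rightarrow> real \<Rightarrow> real \<Rightarrow> real" where
  "log_barrier' a b s = 1 / (s - a) - 1 / (b - s)"

definition log_barrier'' :: "real \<Rightarrow> real \<Rightarrow> real \<Rightarrow> real" where
  "log_barrier'' a b s = - (1 / (s - a)\<^sup>2) - 1 / (b - s)\<^sup>2"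

definition log_barrier''' :: "real \<Rightarrow> real \<Rightarrow> real \<Rightarrow> real" where
  "log_barrier''' a b s = 2 / (s - a) ^ 3 - 2 / (b - s) ^ 3"

lemma log_barrier_has_real_derivative:
  "a < s \<Longrightarrow> s < b \<Longrightarrow> (log_barrier a b has_real_derivative log_barrier' a b s) (at s)"
  unfolding log_barrier_def[abs_def] log_barrier'_def
  by (rule derivative_eq_intros refl | simp)+ (simp add: field_simps)

lemma log_barrier'_has_real_derivative:
  "a < s \<Longrightarrow> s < b \<Longrightarrow> (log_barrier' a b has_real_derivative log_barrier'' a b s) (at s)"
  unfolding log_barrier'_def[abs_def] log_barrier''_def
  by (rule derivative_eq_intros refl | simp)+ (simp add: field_simps power2_eq_square)

lemma log_barrier''_has_real_derivative:
  "a < s \<Longrightarrow> s < b \<Longrightarrow> (log_barrier'' a b has_real_derivative log_barrier''' a b s) (at s)"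
  unfolding log_barrier''_def[abs_def] log_barrier'''_def
  by (rule derivative_eq_intros refl | simp)+
     (simp add: divide_simps, simp add: algebra_simps power2_eq_square power3_eq_cube eval_nat_numeral)

lemma concave_on_log_barrier: "concave_on {a<..<b} (log_barrier a b)"
proof (rule f''_le0_imp_concave[OF _ log_barrier_has_real_derivative log_barrier'_has_real_derivative])
  show "log_barrier'' a b s \<le> 0" for s
    using zero_le_power2[of "1 / (s - a)"] zero_le_power2[of "1 / (b - s)"]
    unfolding log_barrier''_def power_one_over by linarith
qed auto

lemma log_barrier_le: "a < s \<Longrightarrow> s < b \<Longrightarrow> log_barrier a b s \<le> (b - a)\<^sup>2"
proof -
  assume "a < s" "s < b"
  then have "log_barrier a b s \<le> (b - s) * (s - a) - 1"
    unfolding log_barrier_def by (intro ln_le_minus_one) simp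
  also have "(b - s) * (s - a) \<le> (b - a) * (b - a)"
    using \<open>a < s\<close> \<open>s < b\<close> by (intro mult_mono) auto
  finally show ?thesis by (simp add: power2_eq_square)
qed

lemma log_barrier_tendsto_at_bot:
  assumes "\<And>n. a < x n \<and> x n < b" and "x \<longlonglongrightarrow> z" and "z = a \<or> z = b"
  shows "filterlim (\<lambda>n. log_barrier a b (x n)) at_bot sequentially"
proof -
  have "(\<lambda>n. (b - x n) * (x n - a)) \<longlonglongrightarrow> (b - z) * (z - a)"
    by (intro tendsto_intros assms(2))
  then have "(\<lambda>n. (b - x n) * (x n - a)) \<longlonglongrightarrow> 0"
    using assms(3) by auto
  moreover have "eventually (\<lambda>n. (b - x n) * (x n - a) > 0) sequentially"
    using assms(1) by simp
  ultimately have "filterlim (\<lambda>n. (b - x n) * (x n - a)) (at_right 0) sequentially"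
    by (rule tendsto_imp_filterlim_at_right)
  then show ?thesis
    unfolding log_barrier_def by (rule filterlim_compose[OF ln_at_0])
qed

lemma convex_on_box_coordinate_sum:
  fixes l u :: "real ^ 'n"
  assumes "\<And>i. convex_on {l $ i<..<u $ i} (g i)"
  shows "convex_on (box l u) (\<lambda>x. \<Sum>i\<in>UNIV. g i (x $ i))"
proof -
  have "g i ((v *\<^sub>R x + w *\<^sub>R y) $ i) \<le> v * g i (x $ i) + w * g i (y $ i)"
    if "x \<in> box l u" "y \<in> box l u" "v \<ge> 0" "w \<ge> 0" "v + w = 1" for i x y v w
    using assms[of i] that by (auto simp: convex_on_def mem_box_cart)
  then show ?thesis
    unfolding convex_on_def
    by (auto simp: sum_distrib_left simp flip: sum.distrib intro!: sum_mono)
qed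

definition box_barrier :: "real ^ 'n \<Rightarrow> real ^ 'n \<Rightarrow> real ^ 'n \<Rightarrow> real" where
  "box_barrier l u x = (\<Sum>i\<in>UNIV. log_barrier (l $ i) (u $ i) (x $ i))"

lemma concave_on_box_barrier: "concave_on (box l u) (box_barrier l u)"
  unfolding concave_on_def box_barrier_def sum_negf[symmetric]
  by (rule convex_on_box_coordinate_sum) (metis concave_on_def concave_on_log_barrier)

lemma minus_box_barrier_tendsto_at_top:
  fixes l u z :: "real ^ 'n" and x :: "nat \<Rightarrow> real ^ 'n"
  assumes x: "\<And>n. x n \<in> box l u" and lim: "x \<longlonglongrightarrow> z" and z: "z \<notin> box l u"
  shows "filterlim (\<lambda>n. - box_barrier l u (x n)) at_top sequentially"
proof -
  have "z \<in> cbox l u"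
    using x box_subset_cbox by (intro closed_sequentially[OF closed_cbox _ lim]) blast
  then obtain j where j: "z $ j = l $ j \<or> z $ j = u $ j"
    using z unfolding mem_box_cart by (metis order_less_le)
  have xi: "l $ i < x n $ i \<and> x n $ i < u $ i" for n i
    using x by (simp add: mem_box_cart)
  define W where "W = (\<Sum>i\<in>UNIV. (u $ i - l $ i)\<^sup>2)"
  have "box_barrier l u (x n) \<le> log_barrier (l $ j) (u $ j) (x n $ j) + W" for n
  proof -
    have "(\<Sum>i\<in>UNIV - {j}. log_barrier (l $ i) (u $ i) (x n $ i)) \<le> (\<Sum>i\<in>UNIV - {j}. (u $ i - l $ i)\<^sup>2)"
      using xi by (intro sum_mono log_barrier_le) auto
    also have "\<dots> \<le> W"
      unfolding W_def by (intro sum_mono2) auto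
    finally show ?thesis
      unfolding box_barrier_def by (simp add: sum.remove[of UNIV j])
  qed
  moreover have "filterlim (\<lambda>n. - W + - log_barrier (l $ j) (u $ j) (x n $ j)) at_top sequentially"
    using log_barrier_tendsto_at_bot[OF xi tendsto_vec_nth[OF lim] j]
    by (intro filterlim_tendsto_add_at_top[OF tendsto_const]) (simp add: filterlim_uminus_at_bot)
  ultimately show ?thesis
    by (elim filterlim_at_top_mono) (auto simp: algebra_simps)
qed

lemma convex_on_box_bounded_below:
  fixes f :: "real ^ 'n \<Rightarrow> real"
  assumes "convex_on (box l u) f"
  obtains K where "\<And>x. x \<in> box l u \<Longrightarrow> K \<le> f x"
proof (cases "box l u = {}")
  case False
  then obtain c where c: "c \<in> box l u" by blast
  \<comment> \<open>Midpoints with c lie in the compact sub-box C, where f attains a minimum; convexity then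
    bounds f x from below through f ((c + x) / 2).\<close>
  define C where "C = cbox ((1/2) *\<^sub>R (c + l)) ((1/2) *\<^sub>R (c + u))"
  have mid: "(1/2) *\<^sub>R c + (1/2) *\<^sub>R x \<in> C" if "x \<in> box l u" for x
    using c that by (simp add: C_def mem_box_cart; meson less_imp_le)
  have "C \<subseteq> box l u"
  proof
    fix y assume "y \<in> C"
    then have "c $ i + l $ i \<le> y $ i * 2 \<and> y $ i * 2 \<le> c $ i + u $ i" for i
      by (auto simp: C_def mem_box_cart)
    moreover have "l $ i < c $ i \<and> c $ i < u $ i" for i
      using c by (simp add: mem_box_cart)
    ultimately show "y \<in> box l u"
      unfolding mem_box_cart by (smt (verit))
  qed
  moreover have "continuous_on (box l u) f"
    by (rule convex_on_continuous[OF open_box assms])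
  ultimately have "continuous_on C f"
    by (rule continuous_on_subset[rotated])
  moreover have "compact C" "C \<noteq> {}"
    using mid[OF c] by (auto simp: C_def)
  ultimately obtain m where m: "\<And>y. y \<in> C \<Longrightarrow> f m \<le> f y"
    using continuous_attains_inf[of C f] by blast
  have "2 * f m - f c \<le> f x" if "x \<in> box l u" for x
  proof -
    have "f m \<le> f ((1/2) *\<^sub>R c + (1/2) *\<^sub>R x)"
      using m mid[OF that] by blast
    also have "\<dots> \<le> (1/2) * f c + (1/2) * f x"
      using convex_onD[OF assms, of "1/2" c x] c that by simp
    finally show ?thesis by simp
  qed
  then show ?thesis by (rule that)
qed auto

lemma closed_epigraph_of_boundary_blowup:
  fixes F :: "'a::metric_space \<Rightarrow> real"
  assumes cont: "continuous_on S F"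
    and blowup: "\<And>x z. (\<And>n. x n \<in> S) \<Longrightarrow> x \<longlonglongrightarrow> z \<Longrightarrow> z \<notin> S \<Longrightarrow>
      filterlim (\<lambda>n. F (x n)) at_top sequentially"
  shows "closed (epigraph S F)"
  unfolding closed_sequential_limits
proof (intro allI impI, elim conjE)
  fix p :: "nat \<Rightarrow> 'a \<times> real" and q
  assume mem: "\<forall>n. p n \<in> epigraph S F" and lim: "p \<longlonglongrightarrow> q"
  have x: "fst (p n) \<in> S" and le: "F (fst (p n)) \<le> snd (p n)" for n
    using mem by (auto simp: epigraph_def)
  have xlim: "(\<lambda>n. fst (p n)) \<longlonglongrightarrow> fst q" and ylim: "(\<lambda>n. snd (p n)) \<longlonglongrightarrow> snd q"
    using lim by (auto intro: tendsto_intros)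
  show "q \<in> epigraph S F"
  proof (cases "fst q \<in> S")
    case True
    have "(\<lambda>n. F (fst (p n))) \<longlonglongrightarrow> F (fst q)"
      by (rule continuous_on_tendsto_compose[OF cont xlim True]) (simp add: x)
    then have "F (fst q) \<le> snd q"
      using ylim le by (intro LIMSEQ_le) auto
    with True show ?thesis by (simp add: epigraph_def)
  next
    case False
    have "eventually (\<lambda>n. F (fst (p n)) > snd q + 1) sequentially"
      using blowup[OF x xlim False] by (simp add: filterlim_at_top_dense)
    moreover have "eventually (\<lambda>n. snd (p n) < snd q + 1) sequentially"
      using ylim by (rule order_tendstoD) simp
    moreover have "eventually (\<lambda>n. F (fst (p n)) \<le> snd (p n)) sequentially"
      using le by simp
    ultimately have "eventually (\<lambda>n. False) sequentially"
      by eventually_elim linarith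
    then show ?thesis by simp
  qed
qed

lemma convex_on_minus_box_barrier:
  assumes "convex_on (box l u) \<psi>" and "t \<ge> 0"
  shows "convex_on (box l u) (\<lambda>x. \<psi> x - t * box_barrier l u x)"
  using assms concave_on_box_barrier by (intro convex_on_diff concave_on_cmul)

lemma closed_epigraph_minus_box_barrier:
  fixes \<psi> :: "real ^ 'n \<Rightarrow> real"
  assumes cvx: "convex_on (box l u) \<psi>" and t: "t > 0"
  shows "closed (epigraph (box l u) (\<lambda>x. \<psi> x - t * box_barrier l u x))"
proof (rule closed_epigraph_of_boundary_blowup)
  show "continuous_on (box l u) (\<lambda>x. \<psi> x - t * box_barrier l u x)"
    using cvx t by (intro convex_on_continuous[OF open_box] convex_on_minus_box_barrier) auto
  obtain K where K: "\<And>x. x \<in> box l u \<Longrightarrow> K \<le> \<psi> x"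
    using convex_on_box_bounded_below[OF cvx] by blast
  fix x and z :: "real ^ 'n"
  assume x: "\<And>n. x n \<in> box l u" and "x \<longlonglongrightarrow> z" "z \<notin> box l u"
  then have "filterlim (\<lambda>n. K + t * - box_barrier l u (x n)) at_top sequentially"
    using t by (intro filterlim_tendsto_add_at_top[OF tendsto_const]
        filterlim_tendsto_pos_mult_at_top[OF tendsto_const] minus_box_barrier_tendsto_at_top)
  then show "filterlim (\<lambda>n. \<psi> (x n) - t * box_barrier l u (x n)) at_top sequentially"
    by (rule filterlim_at_top_mono) (use K x in auto)
qed

lemma has_derivative_coordinatewise_sum:
  fixes x :: "real ^ 'n"
  assumes "\<And>i. (g i has_real_derivative g' i) (at (x $ i))"
  shows "((\<lambda>y. \<Sum>i\<in>UNIV. c i * g i (y $ i)) has_derivative (\<lambda>m. \<Sum>i\<in>UNIV. c i * m $ i * g' i)) (at x)"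
proof -
  have "((\<lambda>y. g i (y $ i)) has_derivative (\<lambda>m. m $ i * g' i)) (at x)" for i
    using has_derivative_compose[OF bounded_linear_imp_has_derivative[OF bounded_linear_vec_nth]
        has_field_derivative_imp_has_derivative[OF assms]] by (simp add: mult.commute)
  then show ?thesis
    by (intro has_derivative_sum) (auto dest: has_derivative_mult_right simp: mult_ac)
qed

lemma has_derivative_diff_coordinatewise_sum:
  fixes x :: "real ^ 'n"
  assumes "open S" "x \<in> S"
    and "\<And>y. y \<in> S \<Longrightarrow> F y = A y - t * (\<Sum>i\<in>UNIV. c i * g i (y $ i))"
    and "A differentiable at x"
    and "\<And>i. (g i has_real_derivative g' i) (at (x $ i))"
  shows "(F has_derivative (\<lambda>m. frechet_derivative A (at x) m - t * (\<Sum>i\<in>UNIV. c i * m $ i * g' i))) (at x)"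
proof -
  have "((\<lambda>y. A y - t * (\<Sum>i\<in>UNIV. c i * g i (y $ i))) has_derivative
      (\<lambda>m. frechet_derivative A (at x) m - t * (\<Sum>i\<in>UNIV. c i * m $ i * g' i))) (at x)"
    using assms(4,5) unfolding frechet_derivative_works
    by (intro has_derivative_diff has_derivative_mult_right has_derivative_coordinatewise_sum)
  then show ?thesis
    by (rule has_derivative_transform_within_open[OF _ assms(1,2)]) (simp add: assms(3))
qed

lemma C3_onD:
  assumes "C3_on S \<psi>" "open S" "x \<in> S"
  shows "\<psi> differentiable at x" "(\<lambda>y. D1 \<psi> y h) differentiable at x"
    "(\<lambda>y. D2 \<psi> y h k) differentiable at x"
  using assms unfolding C3_on_def by (auto simp: differentiable_on_eq_differentiable_at)

lemma has_derivative_minus_box_barrier: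
  fixes \<psi> :: "real ^ 'n \<Rightarrow> real"
  assumes "C3_on (box l u) \<psi>" "x \<in> box l u"
  shows "((\<lambda>y. \<psi> y - t * box_barrier l u y) has_derivative
      (\<lambda>h. D1 \<psi> x h - t * (\<Sum>i\<in>UNIV. h $ i * log_barrier' (l $ i) (u $ i) (x $ i)))) (at x)"
  using has_derivative_diff_coordinatewise_sum[OF open_box assms(2), of _ \<psi> t "\<lambda>_. 1",
      OF _ C3_onD(1)[OF assms(1) open_box assms(2)] log_barrier_has_real_derivative] assms(2)
  by (simp add: box_barrier_def D1_def mem_box_cart)

lemma D1_minus_box_barrier:
  fixes \<psi> :: "real ^ 'n \<Rightarrow> real"
  assumes "C3_on (box l u) \<psi>" "x \<in> box l u"
  shows "D1 (\<lambda>y. \<psi> y - t * box_barrier l u y) x h =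
    D1 \<psi> x h - t * (\<Sum>i\<in>UNIV. h $ i * log_barrier' (l $ i) (u $ i) (x $ i))"
  unfolding D1_def frechet_derivative_at[OF has_derivative_minus_box_barrier[OF assms], symmetric]
  by simp

lemma has_derivative_D1_minus_box_barrier:
  fixes \<psi> :: "real ^ 'n \<Rightarrow> real"
  assumes "C3_on (box l u) \<psi>" "x \<in> box l u"
  shows "((\<lambda>y. D1 (\<lambda>y. \<psi> y - t * box_barrier l u y) y h) has_derivative
      (\<lambda>k. D2 \<psi> x h k - t * (\<Sum>i\<in>UNIV. h $ i * k $ i * log_barrier'' (l $ i) (u $ i) (x $ i)))) (at x)"
  using has_derivative_diff_coordinatewise_sum[OF open_box assms(2) D1_minus_box_barrier[OF assms(1)]
      C3_onD(2)[OF assms(1) open_box assms(2)] log_barrier'_has_real_derivative] assms(2)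
  by (simp add: D2_def mem_box_cart)

lemma D2_minus_box_barrier:
  fixes \<psi> :: "real ^ 'n \<Rightarrow> real"
  assumes "C3_on (box l u) \<psi>" "x \<in> box l u"
  shows "D2 (\<lambda>y. \<psi> y - t * box_barrier l u y) x h k =
    D2 \<psi> x h k - t * (\<Sum>i\<in>UNIV. h $ i * k $ i * log_barrier'' (l $ i) (u $ i) (x $ i))"
  unfolding D2_def frechet_derivative_at[OF has_derivative_D1_minus_box_barrier[OF assms], symmetric]
  by simp

lemma has_derivative_D2_minus_box_barrier:
  fixes \<psi> :: "real ^ 'n \<Rightarrow> real"
  assumes "C3_on (box l u) \<psi>" "x \<in> box l u"
  shows "((\<lambda>y. D2 (\<lambda>y. \<psi> y - t * box_barrier l u y) y h k) has_derivative
      (\<lambda>m. D3 \<psi> x h k m - t * (\<Sum>i\<in>UNIV. h $ i * k $ i * m $ i * log_barrier''' (l $ i) (u $ i) (x $ i)))) (at x)"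
  using has_derivative_diff_coordinatewise_sum[OF open_box assms(2) D2_minus_box_barrier[OF assms(1)]
      C3_onD(3)[OF assms(1) open_box assms(2)] log_barrier''_has_real_derivative] assms(2)
  by (simp add: D3_def mem_box_cart)

lemma D3_minus_box_barrier:
  fixes \<psi> :: "real ^ 'n \<Rightarrow> real"
  assumes "C3_on (box l u) \<psi>" "x \<in> box l u"
  shows "D3 (\<lambda>y. \<psi> y - t * box_barrier l u y) x h k m =
    D3 \<psi> x h k m - t * (\<Sum>i\<in>UNIV. h $ i * k $ i * m $ i * log_barrier''' (l $ i) (u $ i) (x $ i))"
  unfolding D3_def frechet_derivative_at[OF has_derivative_D2_minus_box_barrier[OF assms], symmetric]
  by simp

lemma C3_on_minus_box_barrier:
  fixes \<psi> :: "real ^ 'n \<Rightarrow> real"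
  assumes C3: "C3_on (box l u) \<psi>"
  shows "C3_on (box l u) (\<lambda>y. \<psi> y - t * box_barrier l u y)"
  unfolding C3_on_def differentiable_on_eq_differentiable_at[OF open_box]
proof (intro conjI allI ballI)
  fix x assume x: "x \<in> box l u"
  show "(\<lambda>y. \<psi> y - t * box_barrier l u y) differentiable at x"
    using has_derivative_minus_box_barrier[OF C3 x] by (rule differentiableI)
  show "(\<lambda>y. D1 (\<lambda>y. \<psi> y - t * box_barrier l u y) y h) differentiable at x" for h
    using has_derivative_D1_minus_box_barrier[OF C3 x] by (rule differentiableI)
  show "(\<lambda>y. D2 (\<lambda>y. \<psi> y - t * box_barrier l u y) y h k) differentiable at x" for h k
    using has_derivative_D2_minus_box_barrier[OF C3 x] by (rule differentiableI)
next
  fix h k m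
  have "continuous_on (box l u) (\<lambda>y. log_barrier''' (l $ i) (u $ i) (y $ i))" for i
    unfolding log_barrier'''_def by (intro continuous_intros) (auto dest!: mem_box_cart(1)[THEN iffD1, THEN spec[of _ i]])
  then have "continuous_on (box l u)
      (\<lambda>y. D3 \<psi> y h k m - t * (\<Sum>i\<in>UNIV. h $ i * k $ i * m $ i * log_barrier''' (l $ i) (u $ i) (y $ i)))"
    using C3 unfolding C3_on_def by (intro continuous_intros) auto
  then show "continuous_on (box l u) (\<lambda>y. D3 (\<lambda>y. \<psi> y - t * box_barrier l u y) y h k m)"
    by (rule continuous_on_cong[THEN iffD1, rotated 2]) (simp_all add: D3_minus_box_barrier[OF C3])
qed

lemma cube_le_square_mult_sqrt:
  fixes a :: real
  assumes "a\<^sup>2 \<le> S"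
  shows "a ^ 3 \<le> a\<^sup>2 * sqrt S"
proof -
  have "a ^ 3 \<le> \<bar>a\<bar> ^ 3" by (metis abs_ge_self power_abs)
  also have "\<dots> = a\<^sup>2 * sqrt (a\<^sup>2)" by (simp add: power2_eq_square power3_eq_cube)
  also have "\<dots> \<le> a\<^sup>2 * sqrt S" using assms by (intro mult_left_mono real_sqrt_le_mono) auto
  finally show ?thesis .
qed

lemma sum_cubes_le_sum_squares_mult_sqrt:
  fixes a b :: "'i \<Rightarrow> real"
  assumes "finite A"
  defines "S \<equiv> \<Sum>i\<in>A. (a i)\<^sup>2 + (b i)\<^sup>2"
  shows "(\<Sum>i\<in>A. a i ^ 3 + b i ^ 3) \<le> S * sqrt S"
proof -
  have "a i ^ 3 + b i ^ 3 \<le> ((a i)\<^sup>2 + (b i)\<^sup>2) * sqrt S" if "i \<in> A" for i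
  proof -
    have "(a i)\<^sup>2 + (b i)\<^sup>2 \<le> S"
      unfolding S_def using assms(1) that by (intro member_le_sum) auto
    then have "(a i)\<^sup>2 \<le> S" "(b i)\<^sup>2 \<le> S"
      using zero_le_power2[of "a i"] zero_le_power2[of "b i"] by linarith+
    then show ?thesis
      using cube_le_square_mult_sqrt by (simp add: distrib_right add_mono)
  qed
  then have "(\<Sum>i\<in>A. a i ^ 3 + b i ^ 3) \<le> (\<Sum>i\<in>A. ((a i)\<^sup>2 + (b i)\<^sup>2) * sqrt S)"
    by (rule sum_mono)
  also have "\<dots> = S * sqrt S" unfolding S_def by (simp add: sum_distrib_right)
  finally show ?thesis .
qed

lemma powr_three_halves: "0 \<le> x \<Longrightarrow> x powr (3/2) = x * sqrt x"
  using powr_add[of x 1 "1/2"] by (simp add: powr_half_sqrt)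

lemma self_concordance_scalar_bound:
  fixes a d t \<beta> S T :: real
  assumes t: "t > 0" and \<beta>: "\<beta> > 0" and S: "S \<ge> 0"
    and d: "\<bar>d\<bar> \<le> \<beta> * a * sqrt S" and T: "T \<le> S * sqrt S"
  shows "d + 2 * t * T \<le> 2 * (1 + \<beta>) / sqrt t * (a + t * S) powr (3/2)"
proof (cases "S = 0")
  case True
  with d T have "d = 0" "T \<le> 0"
    by simp_all
  with t have "d + 2 * t * T \<le> 0"
    by (simp add: mult_nonneg_nonpos)
  moreover have "0 \<le> 2 * (1 + \<beta>) / sqrt t * (a + t * S) powr (3/2)"
    using t \<beta> by simp
  ultimately show ?thesis by linarith
next
  case False
  with S have "sqrt S > 0" by simp
  have "0 \<le> \<beta> * a * sqrt S"
    using d abs_ge_zero order_trans by blast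
  with \<beta> \<open>sqrt S > 0\<close> have a: "a \<ge> 0"
    by (simp add: zero_le_mult_iff)
  define c where "c = a + t * S"
  have "t * S \<le> c" "a \<le> c" "0 \<le> c"
    using a t S by (auto simp: c_def)
  have root: "sqrt t * sqrt S \<le> sqrt c"
    using \<open>t * S \<le> c\<close> by (simp flip: real_sqrt_mult)
  have "sqrt t * d \<le> sqrt t * (\<beta> * a * sqrt S)"
    using d t by (intro mult_left_mono) auto
  moreover have "sqrt t * (2 * t * T) \<le> sqrt t * (2 * t * (S * sqrt S))"
    using T t by (intro mult_left_mono) auto
  ultimately have "sqrt t * (d + 2 * t * T) \<le> \<beta> * a * (sqrt t * sqrt S) + 2 * (t * S) * (sqrt t * sqrt S)"
    by (simp add: algebra_simps)
  also have "\<dots> \<le> \<beta> * c * sqrt c + 2 * c * sqrt c"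
  proof (rule add_mono)
    show "\<beta> * a * (sqrt t * sqrt S) \<le> \<beta> * c * sqrt c"
      using root a t S \<beta> \<open>a \<le> c\<close> by (intro mult_mono mult_left_mono) auto
    show "2 * (t * S) * (sqrt t * sqrt S) \<le> 2 * c * sqrt c"
      using root t S \<open>t * S \<le> c\<close> \<open>0 \<le> c\<close> by (intro mult_mono) auto
  qed
  also have "\<dots> \<le> 2 * (1 + \<beta>) * (c * sqrt c)"
    using \<beta> \<open>0 \<le> c\<close> by (simp add: algebra_simps)
  also have "\<dots> = 2 * (1 + \<beta>) * (a + t * S) powr (3/2)"
    using \<open>0 \<le> c\<close> by (simp add: powr_three_halves c_def)
  finally show ?thesis
    using t by (simp add: field_simps)
qed

theorem lemma1:
  fixes l u :: "real ^ 'n" and \<psi> :: "real ^ 'n \<Rightarrow> real" and \<beta> :: real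
  assumes lu: "\<forall>i. l $ i < u $ i"
    and C3: "C3_on (box l u) \<psi>"
    and cvx: "convex_on (box l u) \<psi>"
    and beta: "\<beta> > 0"
    and bound: "\<forall>x\<in>box l u. \<forall>h.
        \<bar>D3 \<psi> x h h h\<bar> \<le> \<beta> * D2 \<psi> x h h *
          sqrt (\<Sum>i\<in>UNIV. (h $ i)\<^sup>2 / (u $ i - x $ i)\<^sup>2 + (h $ i)\<^sup>2 / (x $ i - l $ i)\<^sup>2)"
  shows "\<forall>t>0. self_concordant (2 * (1 + \<beta>) / sqrt t) (box l u)
           (\<lambda>x. \<psi> x - t * (\<Sum>i\<in>UNIV. ln ((u $ i - x $ i) * (x $ i - l $ i))))"
proof (intro allI impI)
  fix t :: real assume t: "t > 0"
  let ?f = "\<lambda>x. \<psi> x - t * box_barrier l u x"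
  have "D3 ?f x h h h \<le> 2 * (1 + \<beta>) / sqrt t * D2 ?f x h h powr (3/2)"
    if x: "x \<in> box l u" for x h
  proof -
    define a where "a i = h $ i / (u $ i - x $ i)" for i
    define b where "b i = - h $ i / (x $ i - l $ i)" for i
    define S where "S = (\<Sum>i\<in>UNIV. (a i)\<^sup>2 + (b i)\<^sup>2)"
    have second: "h $ i * h $ i * log_barrier'' (l $ i) (u $ i) (x $ i) = - ((a i)\<^sup>2 + (b i)\<^sup>2)" for i
      by (simp add: a_def b_def log_barrier''_def power_divide power2_eq_square algebra_simps)
    have D2: "D2 ?f x h h = D2 \<psi> x h h + t * S"
      unfolding D2_minus_box_barrier[OF C3 x] second sum_negf S_def by simp
    have third: "h $ i * h $ i * h $ i * log_barrier''' (l $ i) (u $ i) (x $ i) = - (2 * (a i ^ 3 + b i ^ 3))" for i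
      by (simp add: a_def b_def log_barrier'''_def power_divide power3_eq_cube algebra_simps)
    have D3: "D3 ?f x h h h = D3 \<psi> x h h h + 2 * t * (\<Sum>i\<in>UNIV. a i ^ 3 + b i ^ 3)"
      unfolding D3_minus_box_barrier[OF C3 x] third sum_negf sum_distrib_left[symmetric] by simp
    have "\<bar>D3 \<psi> x h h h\<bar> \<le> \<beta> * D2 \<psi> x h h * sqrt S"
      using bound x by (simp add: S_def a_def b_def power_divide)
    then show ?thesis
      unfolding D2 D3 S_def
      by (intro self_concordance_scalar_bound[OF t beta _ _ sum_cubes_le_sum_squares_mult_sqrt])
        (simp_all add: sum_nonneg)
  qed
  moreover have "(\<lambda>x. \<psi> x - t * (\<Sum>i\<in>UNIV. ln ((u $ i - x $ i) * (x $ i - l $ i)))) = ?f"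
    by (simp add: box_barrier_def log_barrier_def)
  ultimately show "self_concordant (2 * (1 + \<beta>) / sqrt t) (box l u)
      (\<lambda>x. \<psi> x - t * (\<Sum>i\<in>UNIV. ln ((u $ i - x $ i) * (x $ i - l $ i))))"
    using beta t unfolding self_concordant_def closed_convex_fun_def
    by (simp add: convex_on_minus_box_barrier[OF cvx] closed_epigraph_minus_box_barrier[OF cvx t]
        C3_on_minus_box_barrier[OF C3] open_box)
qed

end
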